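(* Let $A$ be a parametric timed B\"uchi automaton and $\alpha$ a finite abstraction over its symbolic semantics $[\![A]\!]$. A parameter valuation $v$ is contained in the output set $Accepted$ of $CumulativeNDFS([\![A]\!]^\alpha)$ if and only if there exists an accepting run respecting $v$ in $[\![A]\!]^\alpha$.
   Context: Parameters and guards. $P$ is a finite set of parameters; affine expressions $z_0+\sum z_ip_i$ ($z_i\in\mathbb Z$, $p_i\in P$) form $E(P)$. A parameter valuation is $v:P\to\mathbb Z$; bounds $lb,ub:P\to\mathbb Z$ are fixed. $X$ is a finite set of clocks with a zero clock $x_0$. A guard is a finite conjunction of $x_i-x_j\sim e$, $e\in E(P)$, $\sim\in\{\le,<\}$; simple if always $x_i=x_0$ or $x_j=x_0$. Clock valuations $\eta:X\to\mathbb R_{\ge0}$ with $\eta(x_0)=0$; $\eta+d$ delays, $\eta\langle R\rangle$ resets $R$. A PTA is $M=(L,l_0,X,P,\Delta,Inv)$, $\Delta\subseteq L\times(\text{simple guards})\times2^X\times L$, $Inv$ maps locations to simple guards; $[\![M]\!]_v$ has states $(l,\eta)$, initial $(l_0,\mathbf0)$, delay steps $(l,\eta)\xrightarrow{d}(l,\eta+d)$ if $(v,\eta+d)\models Inv(l)$, action steps $(l,\eta)\xrightarrow{act}(l',\eta\langle R\rangle)$ if $(l,g,R,l')\in\Delta$, $(v,\eta)\models g$, $(v,\eta\langle R\rangle)\models Inv(l')$. A PTBA is $A=(M,F)$ with accepting locations $F\subseteq L$. Constraints $e\sim e'$, constraint sets $C$ (finite), $[\![C]\!]$ = satisfying valuations,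 $C\models c$ iff $[\![C]\!]\subseteq[\![c]\!]$. A PDBM $D$ has entries $D_{ij}:x_i-x_j\prec_{ij}e_{ij}$ ($0\le i,j\le|X|$, $\prec_{ij}\in\{\le,<\}$, $e_{ij}\in E(P)\cup\{\infty\}$, $e_{ii}=0$); a CPDBM is $(C,D)$ with $C\models e_{0i}\ge0$; $[\![C,D]\!]=\{(v,\eta):v\in[\![C]\!],\eta\text{ satisfies }D\text{ under }v\}$. Identify $\le$ with true, $<$ with false. Reset $(C,D)\langle x_r\rangle$: entries $rj:=D_{0j}$, $ir:=D_{i0}$ ($i,j\ne r$). Time successor: entries $i0:=(\infty,<)$ for $i\neq0$. Guard $g:x_i-x_j\prec e$, $c:=e_{ij}(\prec_{ij}\Rightarrow\prec)e$: $(C,D)[g]=\{(C,D[g])\}$ if $C\models\neg c$, $\{(C,D)\}$ if $C\models c$, else $\{(C\cup\{c\},D),(C\cup\{\neg c\},D[g])\}$, $D[g]$ setting entry $ij$ to $(e,\prec)$; conjunctions sequentially. Canonisation $(C,D)_c$: all outcomes of nondeterministic Floyd–Warshall, replacing for $k,i,j=0..|X|$ (in that nesting order) the current $(C,D)$ by an element of $(C,D)[x_i-x_j(\prec_{ik}\wedge\prec_{kj})e_{ik}+e_{kj}]$. Symbolic semantics $[\![A]\!]$: states $(l,[\![C,D]\!])$, with $s.[\![C]\!]:=[\![C]\!]$ for $s=(l,[\![C,D]\!])$; accepting if $l\in F$. Initial states $(l_0,[\![C,D]\!])$, $(C,D)\in(C_0,E^\uparrow)[Inv(l_0)]$, $E$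 all entries $(0,\le)$, $C_0=\{lb(p)\le p,p\le ub(p)\}$. $(l,[\![C,D]\!])\Longrightarrow(l',[\![C'_c,D'_c]\!])$ iff $(l,g,R,l')\in\Delta$, $(C'',D'')\in(C,D)[g]$, $(C''_c,D''_c)\in(C'',D'')_c$, $(C',D')\in(C''_c,D''_c\langle R\rangle^\uparrow)[Inv(l')]$, $(C'_c,D'_c)\in(C',D')_c$. Abstraction: $s\in_vS$ for concrete $s=(l,\eta)$, symbolic $S=(l,[\![C,D]\!])$ means $v\in[\![C]\!]$ and $\eta$ satisfies $D$ under $v$; $\preccurlyeq$ is the largest time-abstracting simulation on $[\![M]\!]_v$. An abstraction $\alpha$ maps symbolic states to sets of symbolic states with (i) $(l',[\![C',D']\!])\in\alpha((l,[\![C,D]\!]))\Rightarrow l=l'$, $[\![C']\!]\subseteq[\![C]\!]$, $[\![C',D]\!]\subseteq[\![C',D']\!]$; (ii) for each $v\in[\![C]\!]$ there are $S_1$, $S_2\in\alpha(S_1)$ with every $s\in_vS_2$ simulated ($s\preccurlyeq s'$) by some $s'\in_vS_1$. It is finite if its image is finite. $[\![A]\!]^\alpha$: states $\{S\in\alpha(S')\}$, initial states images of initial states, $Q\Longrightarrow^\alpha Q'$ iff $Q\Longrightarrow S$, $Q'\in\alpha(S)$. A run of $[\![A]\!]^\alpha$ is an infinite $\Longrightarrow^\alpha$-path from an initial state; accepting if it visits accepting states infinitely often; respects $v$ if $v\in s.[\![C]\!]$ for every state $s$ on it. Algorithm CumulativeNDFS on the finite graph $G=[\![A]\!]^\alpha$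 (initial state $s_{init}$): initialise $Found,Stack,Outer,Inner:=\emptyset$; call $OuterDFS(s_{init})$; return $Accepted:=Found$. $OuterDFS(s)$: add $s$ to $Stack$ and $Outer$; for each successor $s'$ of $s$, if $s'\notin Outer$, $s'\notin Stack$ and $s'.[\![C]\!]\not\subseteq Found$, call $OuterDFS(s')$; after the loop, if $s$ is accepting and $s.[\![C]\!]\not\subseteq Found$, call $InnerDFS(s)$; then remove $s$ from $Stack$. $InnerDFS(s)$: add $s$ to $Inner$; for each successor $s'$ of $s$: if $s'\in Stack$, set $Found:=Found\cup s'.[\![C]\!]$ and return; if $s'\notin Inner$ and $s'.[\![C]\!]\not\subseteq Found$, call $InnerDFS(s')$. *)

theory Defs
  imports Main "HOL-Library.Extended_Real"
begin

section \<open>Parameters, affine expressions, guards\<close>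

text \<open>The finite parameter set P is the finite type 'p. An affine expression
  z0 + sum z_i p_i is a pair (z0, coefficient function). Clocks are the natural
  numbers 0..n, clock 0 being the zero clock x0; n = |X| - 1 is the number of
  non-zero clocks.\<close>

type_synonym 'p aexp = "int \<times> ('p \<Rightarrow> int)"
type_synonym 'p pval = "'p \<Rightarrow> int"

definition aeval :: "('p::finite) pval \<Rightarrow> 'p aexp \<Rightarrow> int" where
  "aeval v e = fst e + (\<Sum>p\<in>UNIV. snd e p * v p)"

text \<open>Guard atom (i, j, le, e) stands for x_i - x_j \<prec> e, where le = True means \<le>
  and le = False means <. A guard is a finite conjunction (list) of atoms.\<close>
type_synonym 'p gatom = "nat \<times> nat \<times> bool \<times> 'p aexp"
type_synonym 'p guard = "'p gatom list"

definition simple_guard :: "nat \<Rightarrow> 'p guard \<Rightarrow> bool" where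
  "simple_guard n g = (\<forall>(i,j,le,e)\<in>set g. i \<le> n \<and> j \<le> n \<and> (i = 0 \<or> j = 0))"

type_synonym cval = "nat \<Rightarrow> real"

definition valid_clk :: "nat \<Rightarrow> cval \<Rightarrow> bool" where
  "valid_clk n \<eta> = (\<eta> 0 = 0 \<and> (\<forall>i. 0 \<le> \<eta> i) \<and> (\<forall>i>n. \<eta> i = 0))"

definition guard_sat :: "('p::finite) pval \<Rightarrow> cval \<Rightarrow> 'p guard \<Rightarrow> bool" where
  "guard_sat v \<eta> g = (\<forall>(i,j,le,e)\<in>set g.
     (if le then \<eta> i - \<eta> j \<le> real_of_int (aeval v e) else \<eta> i - \<eta> j < real_of_int (aeval v e)))"

definition delay :: "nat \<Rightarrow> cval \<Rightarrow> real \<Rightarrow> cval" where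
  "delay n \<eta> d = (\<lambda>i. if 1 \<le> i \<and> i \<le> n then \<eta> i + d else \<eta> i)"

definition resetv :: "cval \<Rightarrow> nat set \<Rightarrow> cval" where
  "resetv \<eta> R = (\<lambda>i. if i \<in> R then 0 else \<eta> i)"

section \<open>Parametric timed (Buechi) automata\<close>

record ('l, 'p) ptba =
  locs :: "'l set"
  init_loc :: 'l
  nclk :: nat
  trans :: "('l \<times> 'p guard \<times> nat set \<times> 'l) set"
  inv :: "'l \<Rightarrow> 'p guard"
  accs :: "'l set"

definition ptba :: "('l, 'p) ptba \<Rightarrow> bool" where
  "ptba A = (finite (locs A) \<and> init_loc A \<in> locs A \<and> finite (trans A) \<and>
     (\<forall>(l,g,R,l')\<in>trans A. l \<in> locs A \<and> l' \<in> locs A \<and> simple_guard (nclk A) g \<and>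
         R \<subseteq> {1..nclk A}) \<and>
     (\<forall>l. simple_guard (nclk A) (inv A l)) \<and> accs A \<subseteq> locs A)"

definition cdelay :: "('l, 'p::finite) ptba \<Rightarrow> 'p pval \<Rightarrow> ('l \<times> cval) \<Rightarrow> ('l \<times> cval) \<Rightarrow> bool" where
  "cdelay A v s s' = (\<exists>d\<ge>0. fst s' = fst s \<and> snd s' = delay (nclk A) (snd s) d \<and>
      guard_sat v (snd s') (inv A (fst s)))"

definition caction :: "('l, 'p::finite) ptba \<Rightarrow> 'p pval \<Rightarrow> ('l \<times> cval) \<Rightarrow> ('l \<times> cval) \<Rightarrow> bool" where
  "caction A v s s' = (\<exists>g R. (fst s, g, R, fst s') \<in> trans A \<and> guard_sat v (snd s) g \<and>
      snd s' = resetv (snd s) R \<and> guard_sat v (snd s') (inv A (fst s')))"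

definition tasim :: "('l, 'p::finite) ptba \<Rightarrow> 'p pval \<Rightarrow> ('l \<times> cval \<Rightarrow> 'l \<times> cval \<Rightarrow> bool) \<Rightarrow> bool" where
  "tasim A v Rel = (\<forall>s t. Rel s t \<longrightarrow> fst s = fst t \<and>
      (\<forall>s'. cdelay A v s s' \<longrightarrow> (\<exists>t'. cdelay A v t t' \<and> Rel s' t')) \<and>
      (\<forall>s'. caction A v s s' \<longrightarrow> (\<exists>t'. caction A v t t' \<and> Rel s' t')))"

definition sim :: "('l, 'p::finite) ptba \<Rightarrow> 'p pval \<Rightarrow> 'l \<times> cval \<Rightarrow> 'l \<times> cval \<Rightarrow> bool" where
  "sim A v s t = (\<exists>Rel. tasim A v Rel \<and> Rel s t)"

section \<open>Constraints and parametric DBMs\<close>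

text \<open>Extended expressions: None stands for \<infinity>.  A constraint (a, le, b) means
  a \<le> b (le = True) or a < b (le = False).\<close>
type_synonym 'p xexp = "'p aexp option"
type_synonym 'p cstr = "'p xexp \<times> bool \<times> 'p xexp"
type_synonym 'p dbm = "nat \<Rightarrow> nat \<Rightarrow> 'p xexp \<times> bool"

fun xeval :: "('p::finite) pval \<Rightarrow> 'p xexp \<Rightarrow> ereal" where
  "xeval v None = PInfty"
| "xeval v (Some e) = ereal (real_of_int (aeval v e))"

definition csat :: "('p::finite) pval \<Rightarrow> 'p cstr \<Rightarrow> bool" where
  "csat v c = (case c of (a, le, b) \<Rightarrow>
      (if le then xeval v a \<le> xeval v b else xeval v a < xeval v b))"

definition cneg :: "'p cstr \<Rightarrow> 'p cstr" where
  "cneg c = (case c of (a, le, b) \<Rightarrow> (b, \<not> le, a))"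

definition csem :: "('p::finite) cstr set \<Rightarrow> 'p pval set" where
  "csem C = {v. \<forall>c\<in>C. csat v c}"

definition entails :: "('p::finite) cstr set \<Rightarrow> 'p cstr \<Rightarrow> bool" where
  "entails C c = (csem C \<subseteq> {v. csat v c})"

definition entry_sat :: "('p::finite) pval \<Rightarrow> cval \<Rightarrow> nat \<Rightarrow> nat \<Rightarrow> 'p xexp \<times> bool \<Rightarrow> bool" where
  "entry_sat v \<eta> i j b = (if snd b then ereal (\<eta> i - \<eta> j) \<le> xeval v (fst b)
                          else ereal (\<eta> i - \<eta> j) < xeval v (fst b))"

definition zsem :: "nat \<Rightarrow> ('p::finite) cstr set \<Rightarrow> 'p dbm \<Rightarrow> ('p pval \<times> cval) set" where
  "zsem n C D = {(v, \<eta>). v \<in> csem C \<and> valid_clk n \<eta> \<and>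
      (\<forall>i\<le>n. \<forall>j\<le>n. entry_sat v \<eta> i j (D i j))}"

type_synonym 'p xatom = "nat \<times> nat \<times> bool \<times> 'p xexp"

definition atom_apply :: "('p::finite) cstr set \<times> 'p dbm \<Rightarrow> 'p xatom \<Rightarrow> ('p cstr set \<times> 'p dbm) set" where
  "atom_apply X a = (case X of (C, D) \<Rightarrow> case a of (i, j, le, e) \<Rightarrow>
     (let c = (fst (D i j), snd (D i j) \<longrightarrow> le, e);
          D' = D(i := (D i)(j := (e, le)))
      in if entails C (cneg c) then {(C, D')}
         else if entails C c then {(C, D)}
         else {(insert c C, D), (insert (cneg c) C, D')}))"

fun guard_apply :: "('p::finite) cstr set \<times> 'p dbm \<Rightarrow> 'p xatom list \<Rightarrow> ('p cstr set \<times> 'p dbm) set" where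
  "guard_apply X [] = {X}"
| "guard_apply X (a # as) = (\<Union>Y\<in>atom_apply X a. guard_apply Y as)"

definition to_xatom :: "'p gatom \<Rightarrow> 'p xatom" where
  "to_xatom a = (case a of (i, j, le, e) \<Rightarrow> (i, j, le, Some e))"

fun xadd :: "'p xexp \<Rightarrow> 'p xexp \<Rightarrow> 'p xexp" where
  "xadd (Some (z1, f1)) (Some (z2, f2)) = Some (z1 + z2, \<lambda>p. f1 p + f2 p)"
| "xadd _ _ = None"

definition canon_step :: "('p::finite) cstr set \<times> 'p dbm \<Rightarrow> nat \<times> nat \<times> nat \<Rightarrow> ('p cstr set \<times> 'p dbm) set" where
  "canon_step X t = (case t of (k, i, j) \<Rightarrow>
     (let D = snd X in atom_apply X (i, j, snd (D i k) \<and> snd (D k j), xadd (fst (D i k)) (fst (D k j)))))"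

fun canon_steps :: "('p::finite) cstr set \<times> 'p dbm \<Rightarrow> (nat \<times> nat \<times> nat) list \<Rightarrow> ('p cstr set \<times> 'p dbm) set" where
  "canon_steps X [] = {X}"
| "canon_steps X (t # ts) = (\<Union>Y\<in>canon_step X t. canon_steps Y ts)"

text \<open>Nondeterministic Floyd-Warshall, loops k, i, j = 0..n in this nesting order.\<close>
definition canon :: "nat \<Rightarrow> ('p::finite) cstr set \<times> 'p dbm \<Rightarrow> ('p cstr set \<times> 'p dbm) set" where
  "canon n X = canon_steps X [(k, i, j). k \<leftarrow> [0..<Suc n], i \<leftarrow> [0..<Suc n], j \<leftarrow> [0..<Suc n]]"

definition reset1 :: "'p dbm \<Rightarrow> nat \<Rightarrow> 'p dbm" where
  "reset1 D r = (\<lambda>i j. if i = r \<and> j \<noteq> r then D 0 j else if j = r \<and> i \<noteq> r then D i 0 else D i j)"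

definition resetD :: "'p dbm \<Rightarrow> nat set \<Rightarrow> 'p dbm" where
  "resetD D R = fold (\<lambda>r D. reset1 D r) (sorted_list_of_set R) D"

definition up :: "'p dbm \<Rightarrow> 'p dbm" where
  "up D = (\<lambda>i j. if i \<noteq> 0 \<and> j = 0 then (None, False) else D i j)"

definition Edbm :: "'p dbm" where
  "Edbm = (\<lambda>i j. (Some (0, \<lambda>_. 0), True))"

definition pvar :: "'p \<Rightarrow> 'p xexp" where
  "pvar p = Some (0, \<lambda>q. if q = p then 1 else 0)"

definition pconst :: "int \<Rightarrow> 'p xexp" where
  "pconst z = Some (z, \<lambda>_. 0)"

definition C0 :: "('p \<Rightarrow> int) \<Rightarrow> ('p \<Rightarrow> int) \<Rightarrow> 'p cstr set" where
  "C0 lb ub = (\<Union>p. {(pconst (lb p), True, pvar p), (pvar p, True, pconst (ub p))})"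

section \<open>Symbolic semantics\<close>

text \<open>A symbolic state (l, [[C,D]]) is represented semantically as the triple
  (l, [[C]], [[C,D]]), so that s.[[C]] is well defined.\<close>
type_synonym ('l, 'p) sstate = "'l \<times> 'p pval set \<times> ('p pval \<times> cval) set"

definition mk_state :: "nat \<Rightarrow> 'l \<Rightarrow> ('p::finite) cstr set \<Rightarrow> 'p dbm \<Rightarrow> ('l, 'p) sstate" where
  "mk_state n l C D = (l, csem C, zsem n C D)"

definition pset :: "('l, 'p) sstate \<Rightarrow> 'p pval set" where
  "pset S = fst (snd S)"

definition zone :: "('l, 'p) sstate \<Rightarrow> ('p pval \<times> cval) set" where
  "zone S = snd (snd S)"

definition sym_init :: "('l, 'p::finite) ptba \<Rightarrow> ('p \<Rightarrow> int) \<Rightarrow> ('p \<Rightarrow> int) \<Rightarrow> ('l, 'p) sstate set" where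
  "sym_init A lb ub = {mk_state (nclk A) (init_loc A) C D | C D.
     (C, D) \<in> guard_apply (C0 lb ub, up Edbm) (map to_xatom (inv A (init_loc A)))}"

definition sym_step :: "('l, 'p::finite) ptba \<Rightarrow> ('l, 'p) sstate \<Rightarrow> ('l, 'p) sstate \<Rightarrow> bool" where
  "sym_step A Q S = (\<exists>l C D g R l' C2 D2 C3 D3 C4 D4 C5 D5.
      finite C \<and> Q = mk_state (nclk A) l C D \<and> (l, g, R, l') \<in> trans A \<and>
      (C2, D2) \<in> guard_apply (C, D) (map to_xatom g) \<and>
      (C3, D3) \<in> canon (nclk A) (C2, D2) \<and>
      (C4, D4) \<in> guard_apply (C3, up (resetD D3 R)) (map to_xatom (inv A l')) \<and>
      (C5, D5) \<in> canon (nclk A) (C4, D4) \<and>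
      S = mk_state (nclk A) l' C5 D5)"

section \<open>Abstractions and the abstract semantics\<close>

text \<open>The symbolic states to which the abstraction is applied: initial states of
  [[A]] and all [[A]]-successors of states in the image of alpha.\<close>
inductive_set absdom :: "('l, 'p::finite) ptba \<Rightarrow> ('p \<Rightarrow> int) \<Rightarrow> ('p \<Rightarrow> int) \<Rightarrow>
    (('l, 'p) sstate \<Rightarrow> ('l, 'p) sstate set) \<Rightarrow> ('l, 'p) sstate set"
  for A lb ub \<alpha> where
  dom_init: "S \<in> sym_init A lb ub \<Longrightarrow> S \<in> absdom A lb ub \<alpha>"
| dom_step: "S \<in> absdom A lb ub \<alpha> \<Longrightarrow> Q \<in> \<alpha> S \<Longrightarrow> sym_step A Q S' \<Longrightarrow> S' \<in> absdom A lb ub \<alpha>"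

definition in_v :: "'p pval \<Rightarrow> 'l \<times> cval \<Rightarrow> ('l, 'p) sstate \<Rightarrow> bool" where
  "in_v v s S = (fst s = fst S \<and> v \<in> pset S \<and> (v, snd s) \<in> zone S)"

definition is_abstraction :: "('l, 'p::finite) ptba \<Rightarrow> ('p \<Rightarrow> int) \<Rightarrow> ('p \<Rightarrow> int) \<Rightarrow>
    (('l, 'p) sstate \<Rightarrow> ('l, 'p) sstate set) \<Rightarrow> bool" where
  "is_abstraction A lb ub \<alpha> = (\<forall>S\<in>absdom A lb ub \<alpha>.
     (\<forall>Q\<in>\<alpha> S. \<exists>C' D'. finite C' \<and> Q = mk_state (nclk A) (fst S) C' D' \<and>
         csem C' \<subseteq> pset S \<and> {(v, \<eta>). (v, \<eta>) \<in> zone S \<and> v \<in> csem C'} \<subseteq> zsem (nclk A) C' D') \<and>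
     (\<forall>v\<in>pset S. \<exists>S2\<in>\<alpha> S. v \<in> pset S2 \<and>
         (\<forall>s. in_v v s S2 \<longrightarrow> (\<exists>s'. in_v v s' S \<and> sim A v s s'))))"

definition finite_abstraction :: "('l, 'p::finite) ptba \<Rightarrow> ('p \<Rightarrow> int) \<Rightarrow> ('p \<Rightarrow> int) \<Rightarrow>
    (('l, 'p) sstate \<Rightarrow> ('l, 'p) sstate set) \<Rightarrow> bool" where
  "finite_abstraction A lb ub \<alpha> = finite (\<Union>S\<in>absdom A lb ub \<alpha>. \<alpha> S)"

definition abs_init :: "('l, 'p::finite) ptba \<Rightarrow> ('p \<Rightarrow> int) \<Rightarrow> ('p \<Rightarrow> int) \<Rightarrow>
    (('l, 'p) sstate \<Rightarrow> ('l, 'p) sstate set) \<Rightarrow> ('l, 'p) sstate set" where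
  "abs_init A lb ub \<alpha> = (\<Union>S\<in>sym_init A lb ub. \<alpha> S)"

definition abs_step :: "('l, 'p::finite) ptba \<Rightarrow> (('l, 'p) sstate \<Rightarrow> ('l, 'p) sstate set) \<Rightarrow>
    ('l, 'p) sstate \<Rightarrow> ('l, 'p) sstate \<Rightarrow> bool" where
  "abs_step A \<alpha> Q Q' = (\<exists>S. sym_step A Q S \<and> Q' \<in> \<alpha> S)"

definition abs_run :: "('l, 'p::finite) ptba \<Rightarrow> ('p \<Rightarrow> int) \<Rightarrow> ('p \<Rightarrow> int) \<Rightarrow>
    (('l, 'p) sstate \<Rightarrow> ('l, 'p) sstate set) \<Rightarrow> (nat \<Rightarrow> ('l, 'p) sstate) \<Rightarrow> bool" where
  "abs_run A lb ub \<alpha> \<rho> = (\<rho> 0 \<in> abs_init A lb ub \<alpha> \<and> (\<forall>i. abs_step A \<alpha> (\<rho> i) (\<rho> (Suc i))))"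

definition accepting_run :: "('l, 'p::finite) ptba \<Rightarrow> ('p \<Rightarrow> int) \<Rightarrow> ('p \<Rightarrow> int) \<Rightarrow>
    (('l, 'p) sstate \<Rightarrow> ('l, 'p) sstate set) \<Rightarrow> (nat \<Rightarrow> ('l, 'p) sstate) \<Rightarrow> bool" where
  "accepting_run A lb ub \<alpha> \<rho> = (abs_run A lb ub \<alpha> \<rho> \<and> infinite {i. fst (\<rho> i) \<in> accs A})"

definition respects_val :: "'p pval \<Rightarrow> (nat \<Rightarrow> ('l, 'p) sstate) \<Rightarrow> bool" where
  "respects_val v \<rho> = (\<forall>i. v \<in> pset (\<rho> i))"

section \<open>CumulativeNDFS (nondeterministic big-step semantics)\<close>

text \<open>Global state (Found, Stack, Outer, Inner).  Successors are iterated in an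
  arbitrary order (any duplicate-free enumeration).  "return" in InnerDFS
  terminates the current InnerDFS invocation.\<close>

type_synonym ('n, 'v) gst = "'v set \<times> 'n set \<times> 'n set \<times> 'n set"

inductive outer_call :: "('n \<Rightarrow> 'n set) \<Rightarrow> ('n \<Rightarrow> bool) \<Rightarrow> ('n \<Rightarrow> 'v set) \<Rightarrow> ('n, 'v) gst \<Rightarrow> 'n \<Rightarrow> ('n, 'v) gst \<Rightarrow> bool"
  and outer_loop :: "('n \<Rightarrow> 'n set) \<Rightarrow> ('n \<Rightarrow> bool) \<Rightarrow> ('n \<Rightarrow> 'v set) \<Rightarrow> ('n, 'v) gst \<Rightarrow> 'n list \<Rightarrow> ('n, 'v) gst \<Rightarrow> bool"
  and inner_call :: "('n \<Rightarrow> 'n set) \<Rightarrow> ('n \<Rightarrow> bool) \<Rightarrow> ('n \<Rightarrow> 'v set) \<Rightarrow> ('n, 'v) gst \<Rightarrow> 'n \<Rightarrow> ('n, 'v) gst \<Rightarrow> bool"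
  and inner_loop :: "('n \<Rightarrow> 'n set) \<Rightarrow> ('n \<Rightarrow> bool) \<Rightarrow> ('n \<Rightarrow> 'v set) \<Rightarrow> ('n, 'v) gst \<Rightarrow> 'n list \<Rightarrow> ('n, 'v) gst \<Rightarrow> bool"
  for succ :: "'n \<Rightarrow> 'n set" and acc :: "'n \<Rightarrow> bool" and pc :: "'n \<Rightarrow> 'v set" where
  OC_inner: "distinct xs \<Longrightarrow> set xs = succ s \<Longrightarrow>
     outer_loop succ acc pc (F, insert s St, insert s Ou, Inn) xs (F1, St1, Ou1, Inn1) \<Longrightarrow>
     acc s \<Longrightarrow> \<not> pc s \<subseteq> F1 \<Longrightarrow>
     inner_call succ acc pc (F1, St1, Ou1, Inn1) s (F2, St2, Ou2, Inn2) \<Longrightarrow>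
     outer_call succ acc pc (F, St, Ou, Inn) s (F2, St2 - {s}, Ou2, Inn2)"
| OC_noinner: "distinct xs \<Longrightarrow> set xs = succ s \<Longrightarrow>
     outer_loop succ acc pc (F, insert s St, insert s Ou, Inn) xs (F1, St1, Ou1, Inn1) \<Longrightarrow>
     \<not> (acc s \<and> \<not> pc s \<subseteq> F1) \<Longrightarrow>
     outer_call succ acc pc (F, St, Ou, Inn) s (F1, St1 - {s}, Ou1, Inn1)"
| OL_nil: "outer_loop succ acc pc \<sigma> [] \<sigma>"
| OL_call: "t \<notin> Ou \<Longrightarrow> t \<notin> St \<Longrightarrow> \<not> pc t \<subseteq> F \<Longrightarrow>
     outer_call succ acc pc (F, St, Ou, Inn) t \<sigma>1 \<Longrightarrow> outer_loop succ acc pc \<sigma>1 ts \<sigma>2 \<Longrightarrow>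
     outer_loop succ acc pc (F, St, Ou, Inn) (t # ts) \<sigma>2"
| OL_skip: "\<not> (t \<notin> Ou \<and> t \<notin> St \<and> \<not> pc t \<subseteq> F) \<Longrightarrow>
     outer_loop succ acc pc (F, St, Ou, Inn) ts \<sigma>2 \<Longrightarrow> outer_loop succ acc pc (F, St, Ou, Inn) (t # ts) \<sigma>2"
| IC: "distinct xs \<Longrightarrow> set xs = succ s \<Longrightarrow>
     inner_loop succ acc pc (F, St, Ou, insert s Inn) xs \<sigma> \<Longrightarrow> inner_call succ acc pc (F, St, Ou, Inn) s \<sigma>"
| IL_nil: "inner_loop succ acc pc \<sigma> [] \<sigma>"
| IL_found: "t \<in> St \<Longrightarrow> inner_loop succ acc pc (F, St, Ou, Inn) (t # ts) (F \<union> pc t, St, Ou, Inn)"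
| IL_call: "t \<notin> St \<Longrightarrow> t \<notin> Inn \<Longrightarrow> \<not> pc t \<subseteq> F \<Longrightarrow>
     inner_call succ acc pc (F, St, Ou, Inn) t \<sigma>1 \<Longrightarrow> inner_loop succ acc pc \<sigma>1 ts \<sigma>2 \<Longrightarrow>
     inner_loop succ acc pc (F, St, Ou, Inn) (t # ts) \<sigma>2"
| IL_skip: "t \<notin> St \<Longrightarrow> \<not> (t \<notin> Inn \<and> \<not> pc t \<subseteq> F) \<Longrightarrow>
     inner_loop succ acc pc (F, St, Ou, Inn) ts \<sigma>2 \<Longrightarrow> inner_loop succ acc pc (F, St, Ou, Inn) (t # ts) \<sigma>2"

text \<open>Top level: Found, Stack, Outer, Inner := {}; OuterDFS is started on the
  initial states (in any order), which is OuterDFS on a virtual non-accepting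
  root whose successors are the initial states.\<close>
definition cndfs :: "'n set \<Rightarrow> ('n \<Rightarrow> 'n set) \<Rightarrow> ('n \<Rightarrow> bool) \<Rightarrow> ('n \<Rightarrow> 'v set) \<Rightarrow> 'v set \<Rightarrow> bool" where
  "cndfs inits succ acc pc Accepted = (\<exists>xs \<sigma>. distinct xs \<and> set xs = inits \<and>
      outer_loop succ acc pc ({}, {}, {}, {}) xs \<sigma> \<and> Accepted = fst \<sigma>)"

definition CumulativeNDFS_out :: "('l, 'p::finite) ptba \<Rightarrow> ('p \<Rightarrow> int) \<Rightarrow> ('p \<Rightarrow> int) \<Rightarrow>
    (('l, 'p) sstate \<Rightarrow> ('l, 'p) sstate set) \<Rightarrow> 'p pval set \<Rightarrow> bool" where
  "CumulativeNDFS_out A lb ub \<alpha> Accepted =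
     cndfs (abs_init A lb ub \<alpha>) (\<lambda>Q. {Q'. abs_step A \<alpha> Q Q'}) (\<lambda>Q. fst Q \<in> accs A) pset Accepted"

end

theory Submission
  imports Defs
begin

text \<open>
  The search only ever visits reachable states of the finite graph, and the
  parameter sets shrink along edges, so reachable accepting cycles carry exactly the
  valuations of accepting lasso runs.  Soundness: Found only grows when the inner search
  from an accepting seed \<open>z\<close> hits a stack node \<open>t\<close>; then \<open>t\<close> reaches \<open>z\<close> and \<open>z\<close> reaches
  \<open>t\<close>, so \<open>z\<close> lies on a cycle and its parameter set contains that of \<open>t\<close>.
  Completeness: fix \<open>v\<close> and suppose \<open>v\<close> is never found.  Then no state whose parameter set
  contains \<open>v\<close> is ever pruned, and this set of states is closed under predecessors, so on it
  the algorithm behaves like the classical nested DFS.  The classical invariant (finished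
  states have their successors visited, finished accepting states have been seeds, the
  inner-visited set is closed and contains no accepting cycle) then shows that every such
  accepting state ends up inner-visited and hence lies on no cycle.
\<close>

section \<open>Paths and lassos\<close>

lemma rtrancl_along_path:
  assumes "\<And>i. (\<rho> i, \<rho> (Suc i)) \<in> r" and "j \<le> k"
  shows "(\<rho> j, \<rho> k) \<in> r\<^sup>*"
  using assms(2)
proof (induction k)
  case (Suc k)
  then show ?case
    by (cases "j = Suc k") (auto intro: rtrancl_into_rtrancl assms(1))
qed simp

lemma trancl_along_path:
  assumes "\<And>i. (\<rho> i, \<rho> (Suc i)) \<in> r" and "j < k"
  shows "(\<rho> j, \<rho> k) \<in> r\<^sup>+"
proof (rule rtrancl_into_trancl2)
  show "(\<rho> j, \<rho> (Suc j)) \<in> r" by (fact assms(1))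
  show "(\<rho> (Suc j), \<rho> k) \<in> r\<^sup>*" using assms by (simp add: rtrancl_along_path)
qed

lemma lasso_path:
  assumes "(x, a) \<in> r\<^sup>*" and "(a, a) \<in> r\<^sup>+"
  obtains \<rho> where "\<rho> 0 = x" "\<And>i. (\<rho> i, \<rho> (Suc i)) \<in> r" "\<And>q. \<exists>k\<ge>q. \<rho> k = a"
proof -
  obtain n where "(x, a) \<in> r ^^ n" using assms(1) rtrancl_power by blast
  then obtain f where f: "f 0 = x" "f n = a" "\<forall>i<n. (f i, f (Suc i)) \<in> r"
    using relpow_fun_conv by metis
  obtain m where "m > 0" "(a, a) \<in> r ^^ m" using assms(2) trancl_power by blast
  then obtain g where g: "g 0 = a" "g m = a" "\<forall>i<m. (g i, g (Suc i)) \<in> r" and m: "m > 0"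
    using relpow_fun_conv by metis
  define \<rho> where "\<rho> k = (if k \<le> n then f k else g ((k - n) mod m))" for k
  have cycle: "\<rho> k = g ((k - n) mod m)" if "n \<le> k" for k
    using that f(2) g(1) by (cases "k = n") (auto simp: \<rho>_def)
  have "(\<rho> k, \<rho> (Suc k)) \<in> r" for k
  proof (cases "k < n")
    case True
    then show ?thesis using f(3) by (simp add: \<rho>_def)
  next
    case False
    define j where "j = (k - n) mod m"
    have "j < m" using m by (simp add: j_def)
    moreover have "\<rho> k = g j" "\<rho> (Suc k) = g (Suc j mod m)"
      using cycle[of k] cycle[of "Suc k"] False by (simp_all add: j_def Suc_diff_le mod_Suc_eq)
    ultimately show ?thesis
      using g by (cases "Suc j = m") auto
  qed
  moreover have "\<exists>k\<ge>q. \<rho> k = a" for q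
  proof
    have "q \<le> n + q * m" using m by (simp add: trans_le_add2)
    then show "n + q * m \<ge> q \<and> \<rho> (n + q * m) = a" using cycle[of "n + q * m"] g(1) by simp
  qed
  moreover have "\<rho> 0 = x" using f(1) by (simp add: \<rho>_def)
  ultimately show ?thesis using that by blast
qed

lemma infinite_index_repeats:
  fixes I :: "nat set"
  assumes "infinite I" and "finite (f ` I)"
  obtains p q where "p < q" "p \<in> I" "f p = f q"
proof -
  obtain i j where ij: "i \<in> I" "j \<in> I" "i \<noteq> j" "f i = f j"
    using assms finite_imageD unfolding inj_on_def by blast
  from ij(3) consider "i < j" | "j < i" by linarith
  then show ?thesis using that ij by cases auto
qed

section \<open>Runs of CumulativeNDFS\<close>

abbreviation found :: "('n, 'v) gst \<Rightarrow> 'v set" where "found \<sigma> \<equiv> fst \<sigma>"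
abbreviation stack :: "('n, 'v) gst \<Rightarrow> 'n set" where "stack \<sigma> \<equiv> fst (snd \<sigma>)"
abbreviation outer :: "('n, 'v) gst \<Rightarrow> 'n set" where "outer \<sigma> \<equiv> fst (snd (snd \<sigma>))"
abbreviation inner :: "('n, 'v) gst \<Rightarrow> 'n set" where "inner \<sigma> \<equiv> snd (snd (snd \<sigma>))"

definition succ_rel :: "('n \<Rightarrow> 'n set) \<Rightarrow> ('n \<times> 'n) set" where
  "succ_rel succ = {(x, y). y \<in> succ x}"

lemma in_succ_rel [simp]: "(x, y) \<in> succ_rel succ \<longleftrightarrow> y \<in> succ x"
  by (simp add: succ_rel_def)

definition reachable :: "'n set \<Rightarrow> ('n \<Rightarrow> 'n set) \<Rightarrow> 'n set" where
  "reachable inits succ = {y. \<exists>x\<in>inits. (x, y) \<in> (succ_rel succ)\<^sup>*}"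

lemma dfs_frame:
  "outer_call succ acc pc \<sigma> x \<sigma>' \<Longrightarrow> found \<sigma> \<subseteq> found \<sigma>' \<and> inner \<sigma> \<subseteq> inner \<sigma>' \<and>
     insert x (outer \<sigma>) \<subseteq> outer \<sigma>' \<and> (x \<notin> stack \<sigma> \<longrightarrow> stack \<sigma>' = stack \<sigma>)"
  "outer_loop succ acc pc \<sigma> xs \<sigma>' \<Longrightarrow> found \<sigma> \<subseteq> found \<sigma>' \<and> inner \<sigma> \<subseteq> inner \<sigma>' \<and>
     outer \<sigma> \<subseteq> outer \<sigma>' \<and> stack \<sigma>' = stack \<sigma>"
  "inner_call succ acc pc \<sigma> x \<sigma>' \<Longrightarrow> found \<sigma> \<subseteq> found \<sigma>' \<and> insert x (inner \<sigma>) \<subseteq> inner \<sigma>' \<and>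
     outer \<sigma>' = outer \<sigma> \<and> stack \<sigma>' = stack \<sigma>"
  "inner_loop succ acc pc \<sigma> xs \<sigma>' \<Longrightarrow> found \<sigma> \<subseteq> found \<sigma>' \<and> inner \<sigma> \<subseteq> inner \<sigma>' \<and>
     outer \<sigma>' = outer \<sigma> \<and> stack \<sigma>' = stack \<sigma>"
  by (induction rule: outer_call_outer_loop_inner_call_inner_loop.inducts) auto

lemma inner_search_frame:
  "outer_call succ acc pc \<sigma> x \<sigma>' \<Longrightarrow> True"
  "outer_loop succ acc pc \<sigma> xs \<sigma>' \<Longrightarrow> True"
  "inner_call succ acc pc \<sigma> x \<sigma>' \<Longrightarrow>
     inner \<sigma>' - inner \<sigma> \<subseteq> {y. (x, y) \<in> (succ_rel succ)\<^sup>*} \<inter> insert x (- stack \<sigma>)"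
  "inner_loop succ acc pc \<sigma> xs \<sigma>' \<Longrightarrow>
     inner \<sigma>' - inner \<sigma> \<subseteq> {y. \<exists>t\<in>set xs. (t, y) \<in> (succ_rel succ)\<^sup>*} - stack \<sigma>"
proof (induction rule: outer_call_outer_loop_inner_call_inner_loop.inducts)
  case (IC xs s F St Ou Inn \<sigma>)
  show ?case
  proof
    fix y assume y: "y \<in> inner \<sigma> - inner (F, St, Ou, Inn)"
    show "y \<in> {y. (s, y) \<in> (succ_rel succ)\<^sup>*} \<inter> insert s (- stack (F, St, Ou, Inn))"
    proof (cases "y = s")
      case False
      with y IC.IH obtain t where "t \<in> succ s" "(t, y) \<in> (succ_rel succ)\<^sup>*" "y \<notin> St"
        by auto
      then show ?thesis by (auto intro: converse_rtrancl_into_rtrancl)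
    qed simp
  qed
next
  case (IL_call t St Inn F Ou \<sigma>1 ts \<sigma>2)
  have "inner \<sigma>1 - Inn \<subseteq> {y. (t, y) \<in> (succ_rel succ)\<^sup>*} - St"
    using IL_call(1,5) by auto
  moreover have "inner \<sigma>2 - inner \<sigma>1 \<subseteq> {y. \<exists>t\<in>set ts. (t, y) \<in> (succ_rel succ)\<^sup>*} - St"
    using IL_call(7) dfs_frame(3)[OF IL_call(4)] by simp
  ultimately show ?case by auto
next
  case (IL_skip t St Inn F Ou ts \<sigma>2)
  then show ?case by auto
qed simp_all

locale cndfs_graph =
  fixes inits :: "'n set" and succ :: "'n \<Rightarrow> 'n set" and acc :: "'n \<Rightarrow> bool" and pc :: "'n \<Rightarrow> 'v set"
  assumes finite_reachable: "finite (reachable inits succ)"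
    and pc_antimono: "\<And>x y. x \<in> reachable inits succ \<Longrightarrow> y \<in> succ x \<Longrightarrow> pc y \<subseteq> pc x"
begin

abbreviation E :: "('n \<times> 'n) set" where "E \<equiv> succ_rel succ"
abbreviation Reach :: "'n set" where "Reach \<equiv> reachable inits succ"

lemma inits_reachable: "x \<in> inits \<Longrightarrow> x \<in> Reach"
  unfolding reachable_def by auto

lemma succ_reachable: "x \<in> Reach \<Longrightarrow> y \<in> succ x \<Longrightarrow> y \<in> Reach"
  unfolding reachable_def by (blast intro: rtrancl_into_rtrancl in_succ_rel[THEN iffD2])

lemma rtrancl_reachable: "(x, y) \<in> E\<^sup>* \<Longrightarrow> x \<in> Reach \<Longrightarrow> y \<in> Reach \<and> pc y \<subseteq> pc x"
  by (induction rule: rtrancl_induct) (auto dest: succ_reachable pc_antimono)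

lemma finite_succ: "x \<in> Reach \<Longrightarrow> finite (succ x)"
  using finite_reachable succ_reachable by (meson finite_subset subsetI)

lemma succ_distinct_list:
  assumes "x \<in> Reach" obtains ys where "distinct ys" "set ys = succ x" "set ys \<subseteq> Reach"
  using finite_distinct_list[OF finite_succ[OF assms]] succ_reachable[OF assms] by blast

lemma card_unvisited_mono: "A \<subseteq> B \<Longrightarrow> card (Reach - B) \<le> card (Reach - A)"
  using finite_reachable by (intro card_mono) auto

lemma card_unvisited_less: "x \<in> Reach \<Longrightarrow> x \<notin> A \<Longrightarrow> card (Reach - insert x A) < card (Reach - A)"
  using finite_reachable by (intro psubset_card_mono) auto

lemma inner_loop_exists:
  assumes "card (Reach - inner \<sigma>) \<le> n" and "set xs \<subseteq> Reach"
  shows "\<exists>\<sigma>'. inner_loop succ acc pc \<sigma> xs \<sigma>'"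
  using assms
proof (induction n arbitrary: \<sigma> xs rule: less_induct)
  case (less n)
  from less.prems show ?case
  proof (induction xs arbitrary: \<sigma>)
    case Nil
    then show ?case by (blast intro: IL_nil)
  next
    case (Cons t ts)
    obtain F St Ou Inn where \<sigma>: "\<sigma> = (F, St, Ou, Inn)" by (cases \<sigma>)
    have t: "t \<in> Reach" and ts: "set ts \<subseteq> Reach" using Cons.prems by auto
    consider "t \<in> St" | (call) "t \<notin> St" "t \<notin> Inn" "\<not> pc t \<subseteq> F"
      | (skip) "t \<notin> St" "\<not> (t \<notin> Inn \<and> \<not> pc t \<subseteq> F)" by blast
    then show ?case
    proof cases
      case 1
      then show ?thesis unfolding \<sigma> by (blast intro: IL_found)
    next
      case call
      obtain ys where ys: "distinct ys" "set ys = succ t" "set ys \<subseteq> Reach"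
        using succ_distinct_list[OF t] .
      have "card (Reach - insert t Inn) < n"
        using card_unvisited_less[OF t call(2)] Cons.prems(1) \<sigma> by simp
      then obtain \<sigma>1 where "inner_loop succ acc pc (F, St, Ou, insert t Inn) ys \<sigma>1"
        using less.IH ys(3) by fastforce
      then have call1: "inner_call succ acc pc (F, St, Ou, Inn) t \<sigma>1"
        by (rule IC[where succ = succ, OF ys(1,2)])
      have "card (Reach - inner \<sigma>1) \<le> n"
        using card_unvisited_mono[of Inn "inner \<sigma>1"] dfs_frame(3)[OF call1] Cons.prems(1) \<sigma> by simp
      then obtain \<sigma>2 where "inner_loop succ acc pc \<sigma>1 ts \<sigma>2" using Cons.IH ts by blast
      then show ?thesis unfolding \<sigma> using call call1 by (blast intro: IL_call)
    next
      case skip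
      obtain \<sigma>2 where "inner_loop succ acc pc \<sigma> ts \<sigma>2" using Cons.IH Cons.prems(1) ts by blast
      then show ?thesis unfolding \<sigma> using skip by (blast intro: IL_skip)
    qed
  qed
qed

lemma inner_call_exists:
  assumes "t \<in> Reach" shows "\<exists>\<sigma>'. inner_call succ acc pc \<sigma> t \<sigma>'"
proof -
  obtain F St Ou Inn where \<sigma>: "\<sigma> = (F, St, Ou, Inn)" by (cases \<sigma>)
  obtain ys where ys: "distinct ys" "set ys = succ t" "set ys \<subseteq> Reach"
    using succ_distinct_list[OF assms] .
  obtain \<sigma>' where "inner_loop succ acc pc (F, St, Ou, insert t Inn) ys \<sigma>'"
    using inner_loop_exists[OF order_refl ys(3)] by blast
  then show ?thesis unfolding \<sigma> by (blast intro: IC[where succ = succ, OF ys(1,2)])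
qed

lemma outer_call_exists:
  assumes t: "t \<in> Reach" and ys: "distinct ys" "set ys = succ t"
    and loop: "outer_loop succ acc pc (F, insert t St, insert t Ou, Inn) ys \<sigma>1"
  shows "\<exists>\<sigma>'. outer_call succ acc pc (F, St, Ou, Inn) t \<sigma>'"
proof -
  obtain F1 St1 Ou1 Inn1 where \<sigma>1: "\<sigma>1 = (F1, St1, Ou1, Inn1)" by (cases \<sigma>1)
  show ?thesis
  proof (cases "acc t \<and> \<not> pc t \<subseteq> F1")
    case True
    obtain \<sigma>2 where "inner_call succ acc pc \<sigma>1 t \<sigma>2" using inner_call_exists[OF t] by blast
    then show ?thesis using OC_inner[OF ys(1,2) loop[unfolded \<sigma>1]] True \<sigma>1
      by (metis prod.collapse)
  next
    case False
    then show ?thesis using OC_noinner[OF ys(1,2) loop[unfolded \<sigma>1]] by blast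
  qed
qed

lemma outer_loop_exists:
  assumes "card (Reach - outer \<sigma>) \<le> n" and "set xs \<subseteq> Reach"
  shows "\<exists>\<sigma>'. outer_loop succ acc pc \<sigma> xs \<sigma>'"
  using assms
proof (induction n arbitrary: \<sigma> xs rule: less_induct)
  case (less n)
  from less.prems show ?case
  proof (induction xs arbitrary: \<sigma>)
    case Nil
    then show ?case by (blast intro: OL_nil)
  next
    case (Cons t ts)
    obtain F St Ou Inn where \<sigma>: "\<sigma> = (F, St, Ou, Inn)" by (cases \<sigma>)
    have t: "t \<in> Reach" and ts: "set ts \<subseteq> Reach" using Cons.prems by auto
    show ?case
    proof (cases "t \<notin> Ou \<and> t \<notin> St \<and> \<not> pc t \<subseteq> F")
      case True
      obtain ys where ys: "distinct ys" "set ys = succ t" "set ys \<subseteq> Reach"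
        using succ_distinct_list[OF t] .
      have "card (Reach - insert t Ou) < n"
        using card_unvisited_less[OF t] True Cons.prems(1) \<sigma> by fastforce
      then obtain \<sigma>1 where "outer_loop succ acc pc (F, insert t St, insert t Ou, Inn) ys \<sigma>1"
        using less.IH ys(3) by fastforce
      then obtain c1 where call1: "outer_call succ acc pc (F, St, Ou, Inn) t c1"
        using outer_call_exists[OF t ys(1,2)] by blast
      have "card (Reach - outer c1) \<le> n"
        using card_unvisited_mono[of Ou "outer c1"] dfs_frame(1)[OF call1] Cons.prems(1) \<sigma> by simp
      then obtain \<sigma>2 where "outer_loop succ acc pc c1 ts \<sigma>2" using Cons.IH ts by blast
      then show ?thesis unfolding \<sigma> using True call1 by (blast intro: OL_call)
    next
      case False
      obtain \<sigma>2 where "outer_loop succ acc pc \<sigma> ts \<sigma>2" using Cons.IH Cons.prems(1) ts by blast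
      then show ?thesis unfolding \<sigma> using False by (blast intro: OL_skip)
    qed
  qed
qed

lemma cndfs_exists:
  assumes "finite inits" shows "\<exists>Acc. cndfs inits succ acc pc Acc"
proof -
  obtain xs where xs: "distinct xs" "set xs = inits" using finite_distinct_list[OF assms] by blast
  then have "set xs \<subseteq> Reach" using inits_reachable by blast
  then obtain \<sigma> where "outer_loop succ acc pc ({}, {}, {}, {}) xs \<sigma>"
    using outer_loop_exists[OF order_refl] by blast
  then show ?thesis unfolding cndfs_def using xs by blast
qed

definition acc_cycle_vals :: "'v set" where
  "acc_cycle_vals = {v. \<exists>a\<in>Reach. acc a \<and> (a, a) \<in> E\<^sup>+ \<and> v \<in> pc a}"

lemma dfs_found_sound:
  "outer_call succ acc pc \<sigma> x \<sigma>' \<Longrightarrow> x \<in> Reach \<Longrightarrow> \<forall>t\<in>stack \<sigma>. (t, x) \<in> E\<^sup>* \<Longrightarrow>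
     found \<sigma>' \<subseteq> found \<sigma> \<union> acc_cycle_vals"
  "outer_loop succ acc pc \<sigma> xs \<sigma>' \<Longrightarrow> set xs \<subseteq> Reach \<Longrightarrow> \<forall>x\<in>set xs. \<forall>t\<in>stack \<sigma>. (t, x) \<in> E\<^sup>* \<Longrightarrow>
     found \<sigma>' \<subseteq> found \<sigma> \<union> acc_cycle_vals"
  "inner_call succ acc pc \<sigma> x \<sigma>' \<Longrightarrow> \<forall>z\<in>Reach. acc z \<longrightarrow> (z, x) \<in> E\<^sup>* \<longrightarrow>
     (\<forall>t\<in>stack \<sigma>. (t, z) \<in> E\<^sup>*) \<longrightarrow> found \<sigma>' \<subseteq> found \<sigma> \<union> acc_cycle_vals"
  "inner_loop succ acc pc \<sigma> xs \<sigma>' \<Longrightarrow> \<forall>z\<in>Reach. acc z \<longrightarrow> (\<forall>t\<in>set xs. (z, t) \<in> E\<^sup>+) \<longrightarrow>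
     (\<forall>t\<in>stack \<sigma>. (t, z) \<in> E\<^sup>*) \<longrightarrow> found \<sigma>' \<subseteq> found \<sigma> \<union> acc_cycle_vals"
proof (induction rule: outer_call_outer_loop_inner_call_inner_loop.inducts)
  case (OC_inner xs s F St Ou Inn F1 St1 Ou1 Inn1 F2 St2 Ou2 Inn2)
  have "F1 \<subseteq> F \<union> acc_cycle_vals"
    using OC_inner(2,4) OC_inner.prems succ_reachable
    by (fastforce intro: rtrancl_into_rtrancl)
  moreover have "St1 = insert s St" using dfs_frame(2)[OF OC_inner(3)] by simp
  then have "F2 \<subseteq> F1 \<union> acc_cycle_vals"
    using OC_inner(5,8) OC_inner.prems by auto
  ultimately show ?case by auto
next
  case (OC_noinner xs s F St Ou Inn F1 St1 Ou1 Inn1)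
  then show ?case using succ_reachable by (fastforce intro: rtrancl_into_rtrancl)
next
  case (OL_call t Ou St F Inn \<sigma>1 ts \<sigma>2)
  have "stack \<sigma>1 = St" using dfs_frame(1)[OF OL_call(4)] OL_call(2) by simp
  then show ?case using OL_call by fastforce
next
  case (IC xs s F St Ou Inn \<sigma>)
  then show ?case by (fastforce intro: rtrancl_into_trancl1)
next
  case (IL_found t St F Ou Inn ts)
  show ?case
  proof (intro ballI impI)
    fix z assume z: "z \<in> Reach" "acc z" and "\<forall>u\<in>set (t # ts). (z, u) \<in> E\<^sup>+"
      and "\<forall>u\<in>stack (F, St, Ou, Inn). (u, z) \<in> E\<^sup>*"
    then have zt: "(z, t) \<in> E\<^sup>+" and tz: "(t, z) \<in> E\<^sup>*" using IL_found by auto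
    then have "(z, z) \<in> E\<^sup>+" and "pc t \<subseteq> pc z"
      using rtrancl_reachable[OF trancl_into_rtrancl[OF zt] z(1)] by auto
    then show "found (F \<union> pc t, St, Ou, Inn) \<subseteq> found (F, St, Ou, Inn) \<union> acc_cycle_vals"
      using z unfolding acc_cycle_vals_def by auto
  qed
next
  case (IL_call t St Inn F Ou \<sigma>1 ts \<sigma>2)
  have "stack \<sigma>1 = St" using dfs_frame(3)[OF IL_call(4)] by simp
  then show ?case using IL_call by (fastforce intro: trancl_into_rtrancl)
qed auto

lemma run_reachable:
  assumes "\<rho> 0 \<in> inits" and "\<And>i. \<rho> (Suc i) \<in> succ (\<rho> i)"
  shows "\<rho> k \<in> Reach"
  by (induction k) (use assms in \<open>auto intro: inits_reachable succ_reachable\<close>)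

lemma acc_cycle_vals_iff_run:
  "v \<in> acc_cycle_vals \<longleftrightarrow> (\<exists>\<rho>. \<rho> 0 \<in> inits \<and> (\<forall>i. \<rho> (Suc i) \<in> succ (\<rho> i)) \<and>
     infinite {i. acc (\<rho> i)} \<and> (\<forall>i. v \<in> pc (\<rho> i)))"
proof
  assume "v \<in> acc_cycle_vals"
  then obtain a where a: "a \<in> Reach" "acc a" "(a, a) \<in> E\<^sup>+" "v \<in> pc a"
    unfolding acc_cycle_vals_def by blast
  then obtain x where x: "x \<in> inits" "(x, a) \<in> E\<^sup>*" unfolding reachable_def by blast
  then obtain \<rho> where \<rho>: "\<rho> 0 = x" "\<And>i. (\<rho> i, \<rho> (Suc i)) \<in> E" and visits: "\<And>q. \<exists>k\<ge>q. \<rho> k = a"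
    using lasso_path[OF x(2) a(3)] by blast
  have "infinite {i. acc (\<rho> i)}"
    unfolding infinite_nat_iff_unbounded_le using visits a(2) by fastforce
  moreover have "v \<in> pc (\<rho> k)" for k
  proof -
    obtain k' where "k' \<ge> k" "\<rho> k' = a" using visits by blast
    then have "(\<rho> k, a) \<in> E\<^sup>*" using rtrancl_along_path[where \<rho> = \<rho>, OF \<rho>(2)] by metis
    moreover have "\<rho> k \<in> Reach" using run_reachable \<rho> x(1) by simp
    ultimately show ?thesis using rtrancl_reachable a(4) by blast
  qed
  ultimately show "\<exists>\<rho>. \<rho> 0 \<in> inits \<and> (\<forall>i. \<rho> (Suc i) \<in> succ (\<rho> i)) \<and>
     infinite {i. acc (\<rho> i)} \<and> (\<forall>i. v \<in> pc (\<rho> i))"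
    using \<rho> x(1) by auto
next
  assume "\<exists>\<rho>. \<rho> 0 \<in> inits \<and> (\<forall>i. \<rho> (Suc i) \<in> succ (\<rho> i)) \<and>
     infinite {i. acc (\<rho> i)} \<and> (\<forall>i. v \<in> pc (\<rho> i))"
  then obtain \<rho> where \<rho>: "\<rho> 0 \<in> inits" "\<And>i. \<rho> (Suc i) \<in> succ (\<rho> i)"
    and inf: "infinite {i. acc (\<rho> i)}" and v: "\<And>i. v \<in> pc (\<rho> i)" by blast
  have "finite (\<rho> ` {i. acc (\<rho> i)})"
    using run_reachable[OF \<rho>] finite_reachable by (blast intro: finite_subset)
  then obtain p q where "p < q" "acc (\<rho> p)" "\<rho> p = \<rho> q"
    using infinite_index_repeats[OF inf] by blast
  moreover have "(\<rho> p, \<rho> q) \<in> E\<^sup>+"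
    using trancl_along_path[where \<rho> = \<rho> and r = E] \<rho>(2) \<open>p < q\<close> by simp
  ultimately show "v \<in> acc_cycle_vals"
    unfolding acc_cycle_vals_def using run_reachable[OF \<rho>] v by auto
qed

end

section \<open>Completeness\<close>

locale cndfs_val = cndfs_graph inits succ acc pc
  for inits :: "'n set" and succ acc and pc :: "'n \<Rightarrow> 'v set" +
  fixes v :: 'v
begin

definition Reach_v :: "'n set" where
  "Reach_v = {x \<in> Reach. v \<in> pc x}"

lemma Reach_v_backward: "(x, y) \<in> E\<^sup>* \<Longrightarrow> x \<in> Reach \<Longrightarrow> y \<in> Reach_v \<Longrightarrow> x \<in> Reach_v"
  unfolding Reach_v_def using rtrancl_reachable by blast

lemma Reach_v_backward_succ: "x \<in> Reach \<Longrightarrow> y \<in> succ x \<Longrightarrow> y \<in> Reach_v \<Longrightarrow> x \<in> Reach_v"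
  by (rule Reach_v_backward[of x y]) auto

definition finished_closed :: "'n set \<Rightarrow> 'n set \<Rightarrow> bool" where
  "finished_closed Ou St \<longleftrightarrow> (\<forall>x\<in>(Ou - St) \<inter> Reach_v. succ x \<inter> Reach_v \<subseteq> Ou)"

definition finished_seeded :: "'n set \<Rightarrow> 'n set \<Rightarrow> 'n set \<Rightarrow> bool" where
  "finished_seeded Ou St Inn \<longleftrightarrow> (\<forall>x\<in>(Ou - St) \<inter> Reach_v. acc x \<longrightarrow> x \<in> Inn)"

lemma finished_seeded_mono: "finished_seeded Ou St Inn \<Longrightarrow> Inn \<subseteq> Inn' \<Longrightarrow> finished_seeded Ou St Inn'"
  unfolding finished_seeded_def by blast

text \<open>An inner search whose stack lies in \<open>Reach_v\<close> and that does not find \<open>v\<close> never meets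
  the stack, since meeting a stack state would add its parameters, and with them \<open>v\<close>, to Found.\<close>

lemma inner_search_complete:
  "outer_call succ acc pc \<sigma> x \<sigma>' \<Longrightarrow> True"
  "outer_loop succ acc pc \<sigma> xs \<sigma>' \<Longrightarrow> True"
  "inner_call succ acc pc \<sigma> x \<sigma>' \<Longrightarrow> x \<in> Reach \<Longrightarrow> stack \<sigma> \<subseteq> Reach_v \<Longrightarrow> v \<notin> found \<sigma>' \<Longrightarrow>
     finished_closed (outer \<sigma>) (stack \<sigma>) \<Longrightarrow> finished_seeded (outer \<sigma>) (stack \<sigma>) (inner \<sigma>) \<Longrightarrow>
     x \<in> Reach_v \<longrightarrow> x \<in> outer \<sigma> \<and> (x \<in> stack \<sigma> \<longrightarrow> succ x \<inter> Reach_v \<subseteq> outer \<sigma>) \<Longrightarrow>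
     (\<forall>y\<in>insert x (inner \<sigma>' - inner \<sigma>). \<forall>t\<in>succ y. t \<notin> stack \<sigma> \<and> (t \<in> Reach_v \<longrightarrow> t \<in> inner \<sigma>')) \<and>
     (\<forall>y\<in>(inner \<sigma>' - inner \<sigma>) \<inter> Reach_v. y \<in> outer \<sigma> \<and> (y \<noteq> x \<longrightarrow> \<not> acc y))"
  "inner_loop succ acc pc \<sigma> xs \<sigma>' \<Longrightarrow> set xs \<subseteq> Reach \<Longrightarrow> stack \<sigma> \<subseteq> Reach_v \<Longrightarrow> v \<notin> found \<sigma>' \<Longrightarrow>
     finished_closed (outer \<sigma>) (stack \<sigma>) \<Longrightarrow> finished_seeded (outer \<sigma>) (stack \<sigma>) (inner \<sigma>) \<Longrightarrow>
     set xs \<inter> Reach_v \<subseteq> outer \<sigma> \<Longrightarrow>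
     (\<forall>t\<in>set xs. t \<notin> stack \<sigma> \<and> (t \<in> Reach_v \<longrightarrow> t \<in> inner \<sigma>')) \<and>
     (\<forall>y\<in>inner \<sigma>' - inner \<sigma>. (\<forall>t\<in>succ y. t \<notin> stack \<sigma> \<and> (t \<in> Reach_v \<longrightarrow> t \<in> inner \<sigma>')) \<and>
        (y \<in> Reach_v \<longrightarrow> y \<in> outer \<sigma> \<and> \<not> acc y))"
proof (induction rule: outer_call_outer_loop_inner_call_inner_loop.inducts)
  case (IC xs s F St Ou Inn \<sigma>)
  note prems = IC.prems[unfolded prod.sel]
  have succ_Ou: "set xs \<inter> Reach_v \<subseteq> Ou"
  proof
    fix t assume t: "t \<in> set xs \<inter> Reach_v"
    then have "t \<in> succ s" using IC(2) by simp
    moreover have "s \<in> Reach_v" using Reach_v_backward_succ prems(1) \<open>t \<in> succ s\<close> t by blast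
    ultimately show "t \<in> Ou"
      using prems(4,6) t unfolding finished_closed_def by (cases "s \<in> St") blast+
  qed
  have "set xs \<subseteq> Reach" using IC(2) prems(1) succ_reachable by blast
  note loop = IC(4)[unfolded prod.sel, OF this prems(2,3,4)
      finished_seeded_mono[OF prems(5) subset_insertI] succ_Ou]
  show ?case unfolding prod.sel
  proof
    show "\<forall>y\<in>insert s (inner \<sigma> - Inn). \<forall>t\<in>succ y. t \<notin> St \<and> (t \<in> Reach_v \<longrightarrow> t \<in> inner \<sigma>)"
      using loop IC(2) by blast
    show "\<forall>y\<in>(inner \<sigma> - Inn) \<inter> Reach_v. y \<in> Ou \<and> (y \<noteq> s \<longrightarrow> \<not> acc y)"
      using loop prems(6) by blast
  qed
next
  case (IL_found t St F Ou Inn ts)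
  then have "v \<in> pc t" unfolding Reach_v_def by auto
  then show ?case using IL_found.prems(3) by simp
next
  case (IL_call t St Inn F Ou \<sigma>1 ts \<sigma>2)
  note prems = IL_call.prems[unfolded prod.sel]
  have frame1: "F \<subseteq> found \<sigma>1" "insert t Inn \<subseteq> inner \<sigma>1" "outer \<sigma>1 = Ou" "stack \<sigma>1 = St"
    using dfs_frame(3)[OF IL_call(4)] by auto
  have frame2: "found \<sigma>1 \<subseteq> found \<sigma>2" "inner \<sigma>1 \<subseteq> inner \<sigma>2"
    using dfs_frame(4)[OF IL_call(6)] by auto
  have t_Reach: "t \<in> Reach" and ts_Reach: "set ts \<subseteq> Reach" and ts_Ou: "set ts \<inter> Reach_v \<subseteq> Ou"
    using prems(1,6) by auto
  have t_Ou: "t \<in> Reach_v \<longrightarrow> t \<in> Ou \<and> (t \<in> St \<longrightarrow> succ t \<inter> Reach_v \<subseteq> Ou)"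
    using prems(6) IL_call(1) by auto
  have "v \<notin> found \<sigma>1" using prems(3) frame2(1) by blast
  note call = IL_call(5)[unfolded prod.sel, OF t_Reach prems(2) this prems(4,5) t_Ou]
  note loop = IL_call(7)[unfolded frame1(3,4), OF ts_Reach prems(2,3,4)
      finished_seeded_mono[OF prems(5) order_trans[OF subset_insertI frame1(2)]] ts_Ou]
  have t_nacc: "\<not> acc t" if "t \<in> Reach_v"
    using that IL_call(1,2) prems(5,6) unfolding finished_seeded_def by auto
  have t_inner: "t \<in> inner \<sigma>2" using frame1(2) frame2(2) by blast
  have new: "(\<forall>u\<in>succ y. u \<notin> St \<and> (u \<in> Reach_v \<longrightarrow> u \<in> inner \<sigma>2)) \<and> (y \<in> Reach_v \<longrightarrow> y \<in> Ou \<and> \<not> acc y)"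
    if y: "y \<in> inner \<sigma>2 - Inn" for y
  proof (cases "y \<in> inner \<sigma>1")
    case True
    then show ?thesis using call frame2(2) t_nacc y by (cases "y = t") auto
  next
    case False
    then show ?thesis using loop y by auto
  qed
  have "\<forall>u\<in>set (t # ts). u \<notin> St \<and> (u \<in> Reach_v \<longrightarrow> u \<in> inner \<sigma>2)"
    using loop IL_call(1) t_inner by auto
  then show ?case unfolding prod.sel using new by blast
next
  case (IL_skip t St Inn F Ou ts \<sigma>2)
  note prems = IL_skip.prems[unfolded prod.sel]
  have "set ts \<subseteq> Reach" "set ts \<inter> Reach_v \<subseteq> Ou" using prems(1,6) by auto
  note loop = IL_skip(4)[unfolded prod.sel, OF this(1) prems(2-5) this(2)]
  have "F \<subseteq> found \<sigma>2" "Inn \<subseteq> inner \<sigma>2" using dfs_frame(4)[OF IL_skip(3)] by auto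
  moreover have "t \<in> Reach_v \<longrightarrow> t \<in> Inn"
    using IL_skip(2) prems(3) \<open>F \<subseteq> found \<sigma>2\<close> unfolding Reach_v_def by auto
  ultimately show ?case unfolding prod.sel using loop IL_skip(1) by auto
qed simp_all

definition ndfs_inv :: "'n set \<Rightarrow> 'n set \<Rightarrow> 'n set \<Rightarrow> bool" where
  "ndfs_inv St Ou Inn \<longleftrightarrow> St \<subseteq> Ou \<and> finished_closed Ou St \<and> finished_seeded Ou St Inn \<and>
     (\<forall>x\<in>Inn \<inter> Reach_v. succ x \<inter> Reach_v \<subseteq> Inn) \<and> Inn \<inter> St \<inter> Reach_v = {} \<and> Inn \<inter> Reach_v \<subseteq> Ou \<and>
     (\<forall>x\<in>Inn \<inter> Reach_v. acc x \<longrightarrow> (x, x) \<notin> E\<^sup>+)"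

lemma ndfs_inv_empty: "ndfs_inv {} {} {}"
  unfolding ndfs_inv_def finished_closed_def finished_seeded_def by simp

lemma ndfs_inv_push: "ndfs_inv St Ou Inn \<Longrightarrow> s \<notin> Ou \<Longrightarrow> ndfs_inv (insert s St) (insert s Ou) Inn"
  unfolding ndfs_inv_def finished_closed_def finished_seeded_def by auto

lemma ndfs_inv_pop:
  "ndfs_inv St Ou Inn \<Longrightarrow> succ s \<inter> Reach_v \<subseteq> Ou \<Longrightarrow> (s \<in> Reach_v \<Longrightarrow> acc s \<Longrightarrow> s \<in> Inn) \<Longrightarrow>
     ndfs_inv (St - {s}) Ou Inn"
  unfolding ndfs_inv_def finished_closed_def finished_seeded_def by auto

lemma ndfs_inv_inner_mono:
  "ndfs_inv St Ou Inn \<Longrightarrow> Inn \<subseteq> Inn' \<Longrightarrow> Inn' \<inter> Reach_v \<subseteq> Inn \<Longrightarrow> ndfs_inv St Ou Inn'"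
  unfolding ndfs_inv_def finished_closed_def finished_seeded_def
  by (elim conjE) (intro conjI; blast)

lemma trancl_Reach_v_closed:
  assumes closed: "\<And>y. y \<in> A \<Longrightarrow> succ y \<inter> Reach_v \<subseteq> B" and "B \<inter> Reach_v \<subseteq> A" and "A \<subseteq> Reach_v"
    and "y \<in> A" and "(y, w) \<in> E\<^sup>+" and "w \<in> Reach_v"
  shows "w \<in> B"
  using assms(5,6)
proof (induction rule: trancl_induct)
  case (base w)
  then show ?case using closed \<open>y \<in> A\<close> by auto
next
  case (step a w)
  have "y \<in> Reach" using \<open>y \<in> A\<close> \<open>A \<subseteq> Reach_v\<close> unfolding Reach_v_def by blast
  then have "a \<in> Reach" using rtrancl_reachable trancl_into_rtrancl[OF step.hyps(1)] by blast
  then have "a \<in> A" using Reach_v_backward_succ step assms(2) by auto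
  then show ?case using closed step by auto
qed

lemma ndfs_inv_pop_inner:
  assumes I: "ndfs_inv St Ou Inn" and s: "s \<in> St" "s \<in> Reach_v" "succ s \<inter> Reach_v \<subseteq> Ou"
    and inner: "insert s Inn \<subseteq> Inn'" "Inn' - Inn \<subseteq> insert s (- St)"
    and new_closed: "\<forall>y\<in>insert s (Inn' - Inn). \<forall>t\<in>succ y. t \<notin> St \<and> (t \<in> Reach_v \<longrightarrow> t \<in> Inn')"
    and new_outer: "\<forall>y\<in>(Inn' - Inn) \<inter> Reach_v. y \<in> Ou \<and> (y \<noteq> s \<longrightarrow> \<not> acc y)"
  shows "ndfs_inv (St - {s}) Ou Inn'"
proof -
  have closed: "succ y \<inter> Reach_v \<subseteq> Inn' - St" if "y \<in> Inn' \<inter> Reach_v" for y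
  proof (cases "y \<in> Inn")
    case True
    then show ?thesis using I that inner(1) unfolding ndfs_inv_def by blast
  next
    case False
    then show ?thesis using new_closed that by blast
  qed
  txt \<open>A cycle through the seed \<open>s\<close> would re-enter \<open>s\<close> from an inner-visited state,
    but all \<open>Reach_v\<close>-successors of inner-visited states are off the stack.\<close>
  have acyclic: "(x, x) \<notin> E\<^sup>+" if "x \<in> Inn' \<inter> Reach_v" "acc x" for x
  proof (cases "x \<in> Inn")
    case True
    then show ?thesis using I that unfolding ndfs_inv_def by blast
  next
    case False
    then have "x = s" using new_outer that by blast
    show ?thesis
    proof
      assume "(x, x) \<in> E\<^sup>+"
      then have "s \<in> Inn' - St"
        using trancl_Reach_v_closed[where A = "Inn' \<inter> Reach_v" and B = "Inn' - St", OF closed]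
          that \<open>x = s\<close>
        by blast
      then show False using s(1) by blast
    qed
  qed
  show ?thesis unfolding ndfs_inv_def
  proof (intro conjI)
    show "St - {s} \<subseteq> Ou" using I unfolding ndfs_inv_def by blast
    show "finished_closed Ou (St - {s})"
      using I s(3) unfolding ndfs_inv_def finished_closed_def by blast
    show "finished_seeded Ou (St - {s}) Inn'"
      using I inner(1) unfolding ndfs_inv_def finished_seeded_def by blast
    show "\<forall>x\<in>Inn' \<inter> Reach_v. succ x \<inter> Reach_v \<subseteq> Inn'" using closed by blast
    show "Inn' \<inter> (St - {s}) \<inter> Reach_v = {}" using I inner(2) unfolding ndfs_inv_def by blast
    show "Inn' \<inter> Reach_v \<subseteq> Ou" using I new_outer unfolding ndfs_inv_def by blast
    show "\<forall>x\<in>Inn' \<inter> Reach_v. acc x \<longrightarrow> (x, x) \<notin> E\<^sup>+" using acyclic by blast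
  qed
qed

lemma finished_closed_rtrancl:
  assumes closed: "finished_closed Ou {}" and "x \<in> Ou \<inter> Reach_v"
    and "(x, y) \<in> E\<^sup>*" and "y \<in> Reach_v"
  shows "y \<in> Ou"
  using assms(3,4)
proof (induction rule: rtrancl_induct)
  case base
  then show ?case using assms(2) by blast
next
  case (step a w)
  have "x \<in> Reach" using assms(2) unfolding Reach_v_def by blast
  then have "a \<in> Reach" using rtrancl_reachable[OF step.hyps(1)] by blast
  then have "a \<in> Reach_v" using Reach_v_backward_succ step.hyps(2) step.prems by simp
  then have "a \<in> Ou" using step.IH by blast
  then show ?case
    using closed step.hyps(2) step.prems \<open>a \<in> Reach_v\<close>
    unfolding finished_closed_def in_succ_rel by blast
qed

lemma ndfs_inv_after_inner_search:
  assumes I: "ndfs_inv St Ou Inn" and s: "s \<in> Reach" "s \<in> St" "succ s \<inter> Reach_v \<subseteq> Ou"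
    and St: "St \<subseteq> Reach" "\<forall>t\<in>St. (t, s) \<in> E\<^sup>*"
    and inner: "inner_call succ acc pc (F, St, Ou, Inn) s \<sigma>'" and v: "v \<notin> found \<sigma>'"
  shows "ndfs_inv (St - {s}) Ou (inner \<sigma>')"
proof -
  have visited: "insert s Inn \<subseteq> inner \<sigma>'" using dfs_frame(3)[OF inner] by simp
  have new: "inner \<sigma>' - Inn \<subseteq> {y. (s, y) \<in> E\<^sup>*} \<inter> insert s (- St)"
    using inner_search_frame(3)[OF inner] by simp
  show ?thesis
  proof (cases "s \<in> Reach_v")
    case True
    have "St \<subseteq> Reach_v" using St True Reach_v_backward by blast
    moreover have "finished_closed Ou St" "finished_seeded Ou St Inn" "s \<in> Ou"
      using I s(2) unfolding ndfs_inv_def by blast+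
    ultimately have
        "(\<forall>y\<in>insert s (inner \<sigma>' - Inn). \<forall>t\<in>succ y. t \<notin> St \<and> (t \<in> Reach_v \<longrightarrow> t \<in> inner \<sigma>')) \<and>
        (\<forall>y\<in>(inner \<sigma>' - Inn) \<inter> Reach_v. y \<in> Ou \<and> (y \<noteq> s \<longrightarrow> \<not> acc y))"
      using inner_search_complete(3)[OF inner] s v by simp
    then show ?thesis using ndfs_inv_pop_inner[OF I s(2) True s(3) visited] new by blast
  next
    case False
    txt \<open>Everything the search visited is reachable from \<open>s\<close>, hence outside \<open>Reach_v\<close>.\<close>
    then have "inner \<sigma>' \<inter> Reach_v \<subseteq> Inn" using new Reach_v_backward s(1) by blast
    moreover have "ndfs_inv (St - {s}) Ou Inn" using ndfs_inv_pop[OF I s(3)] False by blast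
    ultimately show ?thesis using ndfs_inv_inner_mono visited by blast
  qed
qed

lemma outer_search_complete:
  "outer_call succ acc pc \<sigma> x \<sigma>' \<Longrightarrow> x \<in> Reach \<Longrightarrow> x \<notin> outer \<sigma> \<Longrightarrow> stack \<sigma> \<subseteq> Reach \<Longrightarrow>
     \<forall>t\<in>stack \<sigma>. (t, x) \<in> E\<^sup>* \<Longrightarrow> v \<notin> found \<sigma>' \<Longrightarrow> ndfs_inv (stack \<sigma>) (outer \<sigma>) (inner \<sigma>) \<Longrightarrow>
     ndfs_inv (stack \<sigma>') (outer \<sigma>') (inner \<sigma>')"
  "outer_loop succ acc pc \<sigma> xs \<sigma>' \<Longrightarrow> set xs \<subseteq> Reach \<Longrightarrow> stack \<sigma> \<subseteq> Reach \<Longrightarrow>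
     \<forall>x\<in>set xs. \<forall>t\<in>stack \<sigma>. (t, x) \<in> E\<^sup>* \<Longrightarrow> v \<notin> found \<sigma>' \<Longrightarrow> ndfs_inv (stack \<sigma>) (outer \<sigma>) (inner \<sigma>) \<Longrightarrow>
     ndfs_inv (stack \<sigma>') (outer \<sigma>') (inner \<sigma>') \<and> set xs \<inter> Reach_v \<subseteq> outer \<sigma>'"
  "inner_call succ acc pc \<sigma> x \<sigma>' \<Longrightarrow> True"
  "inner_loop succ acc pc \<sigma> xs \<sigma>' \<Longrightarrow> True"
proof (induction rule: outer_call_outer_loop_inner_call_inner_loop.inducts)
  case (OC_inner xs s F St Ou Inn F1 St1 Ou1 Inn1 F2 St2 Ou2 Inn2)
  note prems = OC_inner.prems[unfolded prod.sel]
  have frame1: "St1 = insert s St" using dfs_frame(2)[OF OC_inner(3)] by simp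
  have frame2: "F1 \<subseteq> F2" "Ou2 = Ou1" "St2 = St1" using dfs_frame(3)[OF OC_inner(7)] by simp_all
  have "set xs \<subseteq> Reach" "insert s St \<subseteq> Reach" "\<forall>x\<in>set xs. \<forall>t\<in>insert s St. (t, x) \<in> E\<^sup>*"
    using OC_inner(2) prems(1,3,4) succ_reachable by (auto intro: rtrancl_into_rtrancl)
  moreover have "v \<notin> F1" using prems(5) frame2(1) by blast
  ultimately have I1: "ndfs_inv St1 Ou1 Inn1" and "succ s \<inter> Reach_v \<subseteq> Ou1"
    using OC_inner(2,4) ndfs_inv_push[OF prems(6,2)] by auto
  then have "ndfs_inv (St1 - {s}) Ou1 Inn2"
    using ndfs_inv_after_inner_search[OF I1 _ _ _ _ _ OC_inner(7)] frame1 prems(1,3,4,5) by auto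
  then show ?case using frame2 by simp
next
  case (OC_noinner xs s F St Ou Inn F1 St1 Ou1 Inn1)
  note prems = OC_noinner.prems[unfolded prod.sel]
  have "set xs \<subseteq> Reach" "insert s St \<subseteq> Reach" "\<forall>x\<in>set xs. \<forall>t\<in>insert s St. (t, x) \<in> E\<^sup>*"
    using OC_noinner(2) prems(1,3,4) succ_reachable by (auto intro: rtrancl_into_rtrancl)
  then have I1: "ndfs_inv St1 Ou1 Inn1" and "succ s \<inter> Reach_v \<subseteq> Ou1"
    using OC_noinner(2,4) ndfs_inv_push[OF prems(6,2)] prems(5) by auto
  moreover have "\<not> acc s" if "s \<in> Reach_v"
    using that OC_noinner(5) prems(5) unfolding Reach_v_def by auto
  ultimately have "ndfs_inv (St1 - {s}) Ou1 Inn1" by (intro ndfs_inv_pop) auto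
  then show ?case by simp
next
  case (OL_call t Ou St F Inn \<sigma>1 ts \<sigma>2)
  note prems = OL_call.prems[unfolded prod.sel]
  have frame1: "F \<subseteq> found \<sigma>1" "t \<in> outer \<sigma>1" "stack \<sigma>1 = St"
    using dfs_frame(1)[OF OL_call(4)] OL_call(2) by simp_all
  have frame2: "found \<sigma>1 \<subseteq> found \<sigma>2" "outer \<sigma>1 \<subseteq> outer \<sigma>2"
    using dfs_frame(2)[OF OL_call(6)] by simp_all
  have "t \<in> Reach" "\<forall>u\<in>St. (u, t) \<in> E\<^sup>*" "v \<notin> found \<sigma>1" "set ts \<subseteq> Reach"
      "\<forall>x\<in>set ts. \<forall>u\<in>St. (u, x) \<in> E\<^sup>*"
    using prems(1,3,4) frame2(1) by auto
  note call = OL_call(5)[unfolded prod.sel, OF this(1) OL_call(1) prems(2) this(2,3) prems(5)]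
  note loop = OL_call(7)[unfolded frame1(3), OF \<open>set ts \<subseteq> Reach\<close> prems(2)
      \<open>\<forall>x\<in>set ts. \<forall>u\<in>St. (u, x) \<in> E\<^sup>*\<close> prems(4) call[unfolded frame1(3)]]
  show ?case using loop frame1(2) frame2(2) by auto
next
  case (OL_skip t Ou St F Inn ts \<sigma>2)
  note prems = OL_skip.prems[unfolded prod.sel]
  have "set ts \<subseteq> Reach" "\<forall>x\<in>set ts. \<forall>u\<in>St. (u, x) \<in> E\<^sup>*" using prems(1,3) by auto
  note loop = OL_skip(3)[unfolded prod.sel, OF this(1) prems(2) this(2) prems(4,5)]
  have frame: "F \<subseteq> found \<sigma>2" "Ou \<subseteq> outer \<sigma>2" using dfs_frame(2)[OF OL_skip(2)] by simp_all
  have "St \<subseteq> Ou" using prems(5) unfolding ndfs_inv_def by blast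
  moreover have "t \<in> Ou \<or> t \<in> St" if "t \<in> Reach_v"
    using that OL_skip(1) prems(4) frame(1) unfolding Reach_v_def by blast
  ultimately show ?case using loop frame(2) by auto
qed simp_all

lemma acc_cycle_val_found:
  assumes "cndfs inits succ acc pc Acc" and "v \<in> acc_cycle_vals"
  shows "v \<in> Acc"
proof (rule ccontr)
  assume "v \<notin> Acc"
  obtain xs \<sigma> where xs: "set xs = inits" and loop: "outer_loop succ acc pc ({}, {}, {}, {}) xs \<sigma>"
    and "Acc = found \<sigma>"
    using assms(1) unfolding cndfs_def by blast
  have "ndfs_inv (stack \<sigma>) (outer \<sigma>) (inner \<sigma>) \<and> inits \<inter> Reach_v \<subseteq> outer \<sigma>"
    using outer_search_complete(2)[OF loop] xs inits_reachable ndfs_inv_empty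
      \<open>v \<notin> Acc\<close> \<open>Acc = found \<sigma>\<close>
    by auto
  moreover have "stack \<sigma> = {}" using dfs_frame(2)[OF loop] by simp
  ultimately have I: "ndfs_inv {} (outer \<sigma>) (inner \<sigma>)" and inits_outer: "inits \<inter> Reach_v \<subseteq> outer \<sigma>"
    by simp_all
  obtain a where a: "a \<in> Reach" "acc a" "(a, a) \<in> E\<^sup>+" "v \<in> pc a"
    using assms(2) unfolding acc_cycle_vals_def by blast
  then have "a \<in> Reach_v" unfolding Reach_v_def by blast
  obtain x where x: "x \<in> inits" "(x, a) \<in> E\<^sup>*" using a(1) unfolding reachable_def by blast
  then have "x \<in> Reach_v" using Reach_v_backward inits_reachable \<open>a \<in> Reach_v\<close> by blast
  then have "a \<in> outer \<sigma>"
    using finished_closed_rtrancl[OF _ _ x(2) \<open>a \<in> Reach_v\<close>] I inits_outer x(1)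
    unfolding ndfs_inv_def by blast
  then have "a \<in> inner \<sigma>"
    using I a(2) \<open>a \<in> Reach_v\<close> unfolding ndfs_inv_def finished_seeded_def by blast
  then show False using I a(2,3) \<open>a \<in> Reach_v\<close> unfolding ndfs_inv_def by blast
qed

end

context cndfs_graph
begin

lemma cndfs_output_eq:
  assumes "cndfs inits succ acc pc Acc"
  shows "Acc = acc_cycle_vals"
proof
  obtain xs \<sigma> where xs: "set xs = inits" and loop: "outer_loop succ acc pc ({}, {}, {}, {}) xs \<sigma>"
    and "Acc = found \<sigma>"
    using assms unfolding cndfs_def by blast
  moreover have "set xs \<subseteq> Reach" using xs inits_reachable by blast
  note dfs_found_sound(2)[OF loop this]
  ultimately show "Acc \<subseteq> acc_cycle_vals" by simp
  show "acc_cycle_vals \<subseteq> Acc"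
  proof
    fix v assume "v \<in> acc_cycle_vals"
    interpret cndfs_val inits succ acc pc v by unfold_locales
    show "v \<in> Acc" using acc_cycle_val_found[OF assms \<open>v \<in> acc_cycle_vals\<close>] .
  qed
qed

theorem cndfs_correct:
  assumes "finite inits"
  shows "(\<exists>Acc. cndfs inits succ acc pc Acc) \<and>
    (\<forall>Acc. cndfs inits succ acc pc Acc \<longrightarrow> (\<forall>v. v \<in> Acc \<longleftrightarrow>
       (\<exists>\<rho>. \<rho> 0 \<in> inits \<and> (\<forall>i. \<rho> (Suc i) \<in> succ (\<rho> i)) \<and> infinite {i. acc (\<rho> i)} \<and>
          (\<forall>i. v \<in> pc (\<rho> i)))))"
  using cndfs_exists[OF assms] cndfs_output_eq acc_cycle_vals_iff_run by blast

end

section \<open>The abstract symbolic semantics\<close>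

lemma atom_apply_constraints_mono: "Y \<in> atom_apply X a \<Longrightarrow> fst X \<subseteq> fst Y"
  unfolding atom_apply_def by (auto simp: Let_def split: prod.splits if_splits)

lemma guard_apply_constraints_mono: "Y \<in> guard_apply X as \<Longrightarrow> fst X \<subseteq> fst Y"
proof (induction as arbitrary: X)
  case (Cons a as)
  then obtain Z where "Z \<in> atom_apply X a" "Y \<in> guard_apply Z as" by auto
  then show ?case using atom_apply_constraints_mono Cons.IH by blast
qed simp

lemma canon_step_constraints_mono: "Y \<in> canon_step X t \<Longrightarrow> fst X \<subseteq> fst Y"
  unfolding canon_step_def by (cases t) (simp add: Let_def atom_apply_constraints_mono)

lemma canon_steps_constraints_mono: "Y \<in> canon_steps X ts \<Longrightarrow> fst X \<subseteq> fst Y"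
proof (induction ts arbitrary: X)
  case (Cons t ts)
  then obtain Z where "Z \<in> canon_step X t" "Y \<in> canon_steps Z ts" by auto
  then show ?case using canon_step_constraints_mono Cons.IH by blast
qed simp

lemma canon_constraints_mono: "Y \<in> canon n X \<Longrightarrow> fst X \<subseteq> fst Y"
  unfolding canon_def by (rule canon_steps_constraints_mono)

lemma pset_mk_state [simp]: "pset (mk_state n l C D) = csem C"
  by (simp add: pset_def mk_state_def)

lemma sym_step_pset_mono:
  assumes "sym_step A Q S" shows "pset S \<subseteq> pset Q"
proof -
  obtain l C D g R l' C2 D2 C3 D3 C4 D4 C5 D5 where
    states: "Q = mk_state (nclk A) l C D" "S = mk_state (nclk A) l' C5 D5" and
    steps: "(C2, D2) \<in> guard_apply (C, D) (map to_xatom g)"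
      "(C3, D3) \<in> canon (nclk A) (C2, D2)"
      "(C4, D4) \<in> guard_apply (C3, up (resetD D3 R)) (map to_xatom (inv A l'))"
      "(C5, D5) \<in> canon (nclk A) (C4, D4)"
    using assms unfolding sym_step_def by blast
  have "C \<subseteq> C2" using guard_apply_constraints_mono[OF steps(1)] by simp
  also have "C2 \<subseteq> C3" using canon_constraints_mono[OF steps(2)] by simp
  also have "C3 \<subseteq> C4" using guard_apply_constraints_mono[OF steps(3)] by simp
  also have "C4 \<subseteq> C5" using canon_constraints_mono[OF steps(4)] by simp
  finally have "C \<subseteq> C5" .
  then have "csem C5 \<subseteq> csem C" unfolding csem_def by blast
  then show ?thesis using states by simp
qed

lemma abs_reachable_subset_image:
  "reachable (abs_init A lb ub \<alpha>) (\<lambda>Q. {Q'. abs_step A \<alpha> Q Q'}) \<subseteq> (\<Union>S\<in>absdom A lb ub \<alpha>. \<alpha> S)"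
proof
  fix Q assume "Q \<in> reachable (abs_init A lb ub \<alpha>) (\<lambda>Q. {Q'. abs_step A \<alpha> Q Q'})"
  then obtain Q0 where Q0: "Q0 \<in> abs_init A lb ub \<alpha>"
    and path: "(Q0, Q) \<in> (succ_rel (\<lambda>Q. {Q'. abs_step A \<alpha> Q Q'}))\<^sup>*"
    unfolding reachable_def by blast
  from path show "Q \<in> (\<Union>S\<in>absdom A lb ub \<alpha>. \<alpha> S)"
  proof (induction rule: rtrancl_induct)
    case base
    show ?case using Q0 unfolding abs_init_def by (blast intro: dom_init)
  next
    case (step Q1 Q2)
    then obtain S where "S \<in> absdom A lb ub \<alpha>" "Q1 \<in> \<alpha> S" by blast
    moreover obtain S' where "sym_step A Q1 S'" "Q2 \<in> \<alpha> S'"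
      using step.hyps(2) unfolding abs_step_def by auto
    ultimately show ?case by (blast intro: dom_step)
  qed
qed

lemma abs_step_pset_mono:
  assumes "is_abstraction A lb ub \<alpha>" and "S0 \<in> absdom A lb ub \<alpha>" "Q \<in> \<alpha> S0"
    and "abs_step A \<alpha> Q Q'"
  shows "pset Q' \<subseteq> pset Q"
proof -
  obtain S where S: "sym_step A Q S" "Q' \<in> \<alpha> S" using assms(4) unfolding abs_step_def by blast
  then have "S \<in> absdom A lb ub \<alpha>" using assms(2,3) by (blast intro: dom_step)
  then have "pset Q' \<subseteq> pset S" using assms(1) S(2) unfolding is_abstraction_def by fastforce
  then show ?thesis using sym_step_pset_mono[OF S(1)] by blast
qed

lemma finite_abs_init:
  assumes "finite_abstraction A lb ub \<alpha>" shows "finite (abs_init A lb ub \<alpha>)"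
proof (rule finite_subset)
  show "abs_init A lb ub \<alpha> \<subseteq> (\<Union>S\<in>absdom A lb ub \<alpha>. \<alpha> S)"
    unfolding abs_init_def by (blast intro: dom_init)
  show "finite (\<Union>S\<in>absdom A lb ub \<alpha>. \<alpha> S)" using assms unfolding finite_abstraction_def .
qed

lemma abs_semantics_cndfs_graph:
  assumes abs: "is_abstraction A lb ub \<alpha>" and fin: "finite_abstraction A lb ub \<alpha>"
  shows "cndfs_graph (abs_init A lb ub \<alpha>) (\<lambda>Q. {Q'. abs_step A \<alpha> Q Q'}) pset"
proof
  let ?reach = "reachable (abs_init A lb ub \<alpha>) (\<lambda>Q. {Q'. abs_step A \<alpha> Q Q'})"
  show "finite ?reach"
    using abs_reachable_subset_image fin unfolding finite_abstraction_def by (rule finite_subset)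
  show "pset Q' \<subseteq> pset Q" if Q: "Q \<in> ?reach" and Q': "Q' \<in> {Q'. abs_step A \<alpha> Q Q'}" for Q Q'
  proof -
    obtain S where "S \<in> absdom A lb ub \<alpha>" "Q \<in> \<alpha> S" using abs_reachable_subset_image Q by blast
    moreover have "abs_step A \<alpha> Q Q'" using Q' by simp
    ultimately show ?thesis by (rule abs_step_pset_mono[OF abs])
  qed
qed

theorem theorem2:
  fixes A :: "('l, 'p::finite) ptba"
    and lb ub :: "'p \<Rightarrow> int"
    and \<alpha> :: "('l, 'p) sstate \<Rightarrow> ('l, 'p) sstate set"
  assumes "ptba A"
    and "is_abstraction A lb ub \<alpha>"
    and "finite_abstraction A lb ub \<alpha>"
  shows "(\<exists>Accepted. CumulativeNDFS_out A lb ub \<alpha> Accepted) \<and>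
         (\<forall>Accepted. CumulativeNDFS_out A lb ub \<alpha> Accepted \<longrightarrow>
            (\<forall>v. v \<in> Accepted \<longleftrightarrow>
               (\<exists>\<rho>. accepting_run A lb ub \<alpha> \<rho> \<and> respects_val v \<rho>)))"
proof -
  let ?inits = "abs_init A lb ub \<alpha>" and ?succ = "\<lambda>Q. {Q'. abs_step A \<alpha> Q Q'}"
  interpret cndfs_graph ?inits ?succ "\<lambda>Q. fst Q \<in> accs A" pset
    using abs_semantics_cndfs_graph[OF assms(2,3)] .
  have run_iff: "accepting_run A lb ub \<alpha> \<rho> \<and> respects_val v \<rho> \<longleftrightarrow>
      \<rho> 0 \<in> ?inits \<and> (\<forall>i. \<rho> (Suc i) \<in> ?succ (\<rho> i)) \<and> infinite {i. fst (\<rho> i) \<in> accs A} \<and>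
      (\<forall>i. v \<in> pset (\<rho> i))" for \<rho> v
    unfolding accepting_run_def abs_run_def respects_val_def by auto
  show ?thesis
    using cndfs_correct[OF finite_abs_init[OF assms(3)]]
    unfolding CumulativeNDFS_out_def run_iff by simp
qed

end
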